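(* Let $x_0\in\mathbb{R}$, $\alpha\in\mathbb{R}$, $0\le\gamma<1$, and let $S(\sigma)=\alpha+\frac{\gamma}{1-\gamma}(\alpha-\sigma)$. Let $\psi$ be a wavelet in the Schwartz class with all moments vanishing, and let $f$ be the function (or distribution) defined near $x_0$ by $$f(x)=\sum_{j\ge0}\ \sum_{k\in\mathbb{Z},\ |k-2^jx_0|<2^j} c_{j,k}\,\psi(2^jx-k).$$ Then the 2-microlocal frontier of $f$ at $x_0$ is $S$ if and only if there exist positive sequences $(\mathcal{C}_{j,k})$, $(\lambda_{j,k})$ (indexed by $j\ge0$, $|k-2^jx_0|<2^j$) such that for all $j\ge0$ and $|k-2^jx_0|<2^j$, $$|c_{j,k}|\le \mathcal{C}_{j,k}\cdot\inf_{\sigma\in\mathbb{R}}\left\{2^{-jS(\sigma)}\left(\frac{1+|k-2^jx_0|}{\lambda_{j,k}}\right)^{S(\sigma)-\sigma}\right\}\qquad(\ast)$$ and: (i) for every $C\in\mathbb{R}$ and every choice of integers $k_j$ with $|k_j-2^jx_0|<2^j$, $$\limsup_{j\to+\infty}\left(\frac{\log_2(\mathcal{C}_{j,k_j})}{j}+C\,\frac{\log_2(\lambda_{j,k_j})}{j}\right)\le0;$$ (ii) there exists a sequence $(j_n,k_n)$ with $j_n$ strictly increasing and $|k_n-2^{j_n}x_0|<2^{j_n}$ such that equality holds in $(\ast)$ for $(j,k)=(j_n,k_n)$, $c_{j_n,k_n}\neq0$, and $$\lim_{n\to+\infty}\frac{\log_2(\mathcal{C}_{j_n,k_n})}{j_n}=0,\qquad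 \lim_{n\to+\infty}\frac{\log_2(\lambda_{j_n,k_n})}{j_n}=0.$$
   Context: A wavelet is a function $\psi\in L^2(\mathbb{R})$ such that $\{2^{j/2}\psi(2^jx-k)\}_{j,k\in\mathbb{Z}}$ is an orthonormal basis of $L^2(\mathbb{R})$; the wavelet coefficients of $f$ are $c_{j,k}=2^{j/2}\langle f,\psi_{j,k}\rangle$ with $\psi_{j,k}(x)=2^{j/2}\psi(2^jx-k)$. For $s,s'\in\mathbb{R}$, the (local) 2-microlocal space $C^{s,s'}_{x_0}$ is defined as: $f\in C^{s,s'}_{x_0}$ iff there is $C>0$ with $|c_{j,k}|\le C\,2^{-js}(1+|k-2^jx_0|)^{-s'}$ for all $j\ge0$ and $k\in\mathbb{Z}$ with $|k/2^j-x_0|<1$. The 2-microlocal frontier of $f$ at $x_0$ is the function $\sigma\mapsto\sup\{s: f\in C^{s,\sigma-s}_{x_0}\}$. *)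

theory Defs
  imports "HOL-Analysis.Analysis"
begin

text \<open>Wavelet coefficients are given as a family c :: nat => int => real,
  c j k standing for c_{j,k} (j >= 0). The local 2-microlocal space only
  involves indices with j >= 0 and |k/2^j - x0| < 1.\<close>

definition in_index :: "real \<Rightarrow> nat \<Rightarrow> int \<Rightarrow> bool" where
  "in_index x0 j k \<longleftrightarrow> \<bar>real_of_int k / 2 ^ j - x0\<bar> < 1"

definition two_microlocal :: "(nat \<Rightarrow> int \<Rightarrow> real) \<Rightarrow> real \<Rightarrow> real \<Rightarrow> real \<Rightarrow> bool" where
  "two_microlocal c x0 s s' \<longleftrightarrow>
     (\<exists>C>0. \<forall>j k. in_index x0 j k \<longrightarrow>
        \<bar>c j k\<bar> \<le> C * 2 powr (- real j * s) * (1 + \<bar>real_of_int k - 2 ^ j * x0\<bar>) powr (- s'))"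

definition microlocal_frontier :: "(nat \<Rightarrow> int \<Rightarrow> real) \<Rightarrow> real \<Rightarrow> real \<Rightarrow> ereal" where
  "microlocal_frontier c x0 \<sigma> = Sup {ereal s | s. two_microlocal c x0 s (\<sigma> - s)}"

definition S_line :: "real \<Rightarrow> real \<Rightarrow> real \<Rightarrow> real" where
  "S_line \<alpha> \<gamma> \<sigma> = \<alpha> + \<gamma> / (1 - \<gamma>) * (\<alpha> - \<sigma>)"

definition bound_inf :: "real \<Rightarrow> real \<Rightarrow> real \<Rightarrow> nat \<Rightarrow> int \<Rightarrow> real \<Rightarrow> real" where
  "bound_inf \<alpha> \<gamma> x0 j k lam =
     Inf (range (\<lambda>\<sigma>. 2 powr (- real j * S_line \<alpha> \<gamma> \<sigma>) *
        ((1 + \<bar>real_of_int k - 2 ^ j * x0\<bar>) / lam) powr (S_line \<alpha> \<gamma> \<sigma> - \<sigma>)))"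

end

theory Submission
  imports Defs
begin

text \<open>The infimum in the bound (*) equals \<open>2^{-j\<alpha>}\<close> when
  \<open>\<lambda>_{j,k} = (1 + |k - 2^j x_0|) 2^{-\<gamma> j}\<close> and vanishes otherwise, so (*) fixes \<open>\<lambda>\<close> at every
  nonzero coefficient and reads \<open>|c_{j,k}| \<le> C_{j,k} 2^{-j\<alpha>}\<close>. In logarithms, membership in
  \<open>C^{s,t}_{x_0}\<close> becomes \<open>log C + t log \<lambda> \<le> L + j (1 - \<gamma>) (S(s + t) - s)\<close> at the nonzero
  coefficients. Hence condition (i) yields every \<open>s < S(\<sigma>)\<close>, and along the sequence of (ii) the
  right-hand side must stay nonnegative, which excludes \<open>s > S(\<sigma>)\<close>. Conversely, if the frontier
  is \<open>S\<close>, the choice \<open>C_{j,k} = |c_{j,k}| 2^{j\<alpha>}\<close> with \<open>\<lambda>\<close> as above turns (*) into an equality;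
  the estimates along the lines \<open>t = 0, \<plusminus>1\<close> give (i) and, combined with the failure of
  \<open>C^{\<alpha>+\<epsilon>,0}_{x_0}\<close>, a sequence of indices as in (ii).\<close>

definition offset_weight :: "real \<Rightarrow> nat \<Rightarrow> int \<Rightarrow> real" where
  "offset_weight x0 j k = 1 + \<bar>real_of_int k - 2 ^ j * x0\<bar>"

lemma offset_weight_ge_1: "1 \<le> offset_weight x0 j k"
  unfolding offset_weight_def by simp

lemma offset_weight_pos [simp]: "0 < offset_weight x0 j k"
  using offset_weight_ge_1 [of x0 j k] by linarith

lemma offset_weight_neq_0 [simp]: "offset_weight x0 j k \<noteq> 0"
  using offset_weight_pos [of x0 j k] by linarith

lemma in_index_iff: "in_index x0 j k \<longleftrightarrow> \<bar>real_of_int k - 2 ^ j * x0\<bar> < 2 ^ j"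
proof -
  have "real_of_int k / 2 ^ j - x0 = (real_of_int k - 2 ^ j * x0) / 2 ^ j"
    by (simp add: field_simps)
  then show ?thesis
    unfolding in_index_def by (simp add: divide_less_eq)
qed

lemma log_offset_weight_le:
  assumes "in_index x0 j k"
  shows "log 2 (offset_weight x0 j k) \<le> real j + 1"
proof -
  have "offset_weight x0 j k \<le> 2 * 2 ^ j"
    using assms one_le_power [of "2::real" j] unfolding in_index_iff offset_weight_def by linarith
  then have "log 2 (offset_weight x0 j k) \<le> log 2 (2 * 2 ^ j)"
    by simp
  also have "\<dots> = real j + 1"
    by (simp add: log_mult log_nat_power)
  finally show ?thesis .
qed

lemma finite_in_index: "finite {k. in_index x0 j k}"
proof (rule finite_subset)
  show "{k. in_index x0 j k} \<subseteq> {\<lfloor>2 ^ j * x0 - 2 ^ j\<rfloor> .. \<lceil>2 ^ j * x0 + 2 ^ j\<rceil>}"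
    unfolding in_index_iff by (auto simp: abs_less_iff floor_le_iff le_ceiling_iff)
qed simp

lemma in_index_round: "in_index x0 j (round (2 ^ j * x0))"
  using of_int_round_abs_le [of "2 ^ j * x0"] one_le_power [of "2::real" j]
  unfolding in_index_iff by linarith

lemma le_scaled_powr_iff_log:
  assumes "0 < K" "0 < A" "0 < x"
  shows "x \<le> K * 2 powr u * A powr v \<longleftrightarrow> log 2 x \<le> log 2 K + u + v * log 2 A"
proof -
  have "x \<le> K * 2 powr u * A powr v \<longleftrightarrow> log 2 x \<le> log 2 (K * 2 powr u * A powr v)"
    using assms by (subst log_le_cancel_iff) auto
  also have "log 2 (K * 2 powr u * A powr v) = log 2 K + u + v * log 2 A"
    using assms by (simp add: log_mult log_powr)
  finally show ?thesis .
qed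

lemma two_microlocal_iff_log:
  "two_microlocal c x0 s t \<longleftrightarrow>
    (\<exists>L. \<forall>j k. in_index x0 j k \<and> c j k \<noteq> 0 \<longrightarrow>
       log 2 \<bar>c j k\<bar> \<le> L - real j * s - t * log 2 (offset_weight x0 j k))"
    (is "_ \<longleftrightarrow> (\<exists>L. ?bound L)")
proof
  assume "two_microlocal c x0 s t"
  then obtain C where "C > 0" and C: "\<And>j k. in_index x0 j k \<Longrightarrow>
      \<bar>c j k\<bar> \<le> C * 2 powr (- real j * s) * offset_weight x0 j k powr (- t)"
    unfolding two_microlocal_def offset_weight_def by blast
  have "log 2 \<bar>c j k\<bar> \<le> log 2 C - real j * s - t * log 2 (offset_weight x0 j k)"
    if "in_index x0 j k" "c j k \<noteq> 0" for j k
    using C [OF that(1)] le_scaled_powr_iff_log [OF \<open>C > 0\<close> offset_weight_pos, of "\<bar>c j k\<bar>"] that(2)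
    by simp
  then show "\<exists>L. ?bound L"
    by blast
next
  assume "\<exists>L. ?bound L"
  then obtain L where L: "?bound L" ..
  have "\<bar>c j k\<bar> \<le> 2 powr L * 2 powr (- real j * s) * offset_weight x0 j k powr (- t)"
    if "in_index x0 j k" for j k
    using L that le_scaled_powr_iff_log [of "2 powr L" "offset_weight x0 j k" "\<bar>c j k\<bar>"]
    by (cases "c j k = 0") auto
  then show "two_microlocal c x0 s t"
    unfolding two_microlocal_def offset_weight_def by (intro exI [of _ "2 powr L"]) simp
qed

lemma two_microlocal_trade_regularity:
  assumes "two_microlocal c x0 s t" and "s' \<le> s"
  shows "two_microlocal c x0 s' (t + (s - s'))"
proof -
  obtain L where L: "\<And>j k. in_index x0 j k \<Longrightarrow> c j k \<noteq> 0 \<Longrightarrow>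
      log 2 \<bar>c j k\<bar> \<le> L - real j * s - t * log 2 (offset_weight x0 j k)"
    using assms(1) unfolding two_microlocal_iff_log by blast
  show ?thesis
    unfolding two_microlocal_iff_log
  proof (intro exI [of _ "L + (s - s')"] allI impI)
    fix j k
    assume jk: "in_index x0 j k \<and> c j k \<noteq> 0"
    have "0 \<le> (s - s') * (real j + 1 - log 2 (offset_weight x0 j k))"
      using log_offset_weight_le [of x0 j k] jk assms(2) by simp
    then show "log 2 \<bar>c j k\<bar> \<le> L + (s - s') - real j * s' - (t + (s - s')) * log 2 (offset_weight x0 j k)"
      using L [of j k] jk by (simp add: algebra_simps)
  qed
qed

lemma two_microlocal_diagonal_downward:
  assumes "two_microlocal c x0 s (\<sigma> - s)" and "s' \<le> s"
  shows "two_microlocal c x0 s' (\<sigma> - s')"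
  using two_microlocal_trade_regularity [OF assms] by simp

lemma microlocal_frontier_eq_ereal_iff:
  "microlocal_frontier c x0 \<sigma> = ereal S \<longleftrightarrow>
    (\<forall>s < S. two_microlocal c x0 s (\<sigma> - s)) \<and> (\<forall>s. two_microlocal c x0 s (\<sigma> - s) \<longrightarrow> s \<le> S)"
    (is "?front = _ \<longleftrightarrow> ?below \<and> ?above")
proof
  assume front: "?front = ereal S"
  have "?below"
  proof (intro allI impI)
    fix s
    assume "s < S"
    then have "ereal s < ?front"
      using front by simp
    then obtain s' where "s < s'" "two_microlocal c x0 s' (\<sigma> - s')"
      unfolding microlocal_frontier_def less_Sup_iff by auto
    then show "two_microlocal c x0 s (\<sigma> - s)"
      using two_microlocal_diagonal_downward by simp
  qed
  moreover have "?above"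
    using Sup_upper [of "ereal s" "{ereal s | s. two_microlocal c x0 s (\<sigma> - s)}" for s] front
    unfolding microlocal_frontier_def by fastforce
  ultimately show "?below \<and> ?above" ..
next
  assume "?below \<and> ?above"
  then have below: "?below" and above: "?above" by blast+
  show "?front = ereal S"
    unfolding microlocal_frontier_def
  proof (rule antisym)
    show "Sup {ereal s | s. two_microlocal c x0 s (\<sigma> - s)} \<le> ereal S"
      using above by (auto intro!: Sup_least)
    show "ereal S \<le> Sup {ereal s | s. two_microlocal c x0 s (\<sigma> - s)}"
      unfolding le_Sup_iff
    proof (intro allI impI)
      fix y
      assume "y < ereal S"
      then obtain z where "y < ereal z" "ereal z < ereal S"
        using ereal_dense2 by blast
      then show "\<exists>a \<in> {ereal s | s. two_microlocal c x0 s (\<sigma> - s)}. y < a"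
        using below by auto
    qed
  qed
qed

lemma S_line_gap:
  assumes "\<gamma> < 1"
  shows "(1 - \<gamma>) * (S_line \<alpha> \<gamma> \<sigma> - s) = \<alpha> - \<gamma> * (\<sigma> - s) - s"
  using assms unfolding S_line_def by (simp add: field_simps)

lemma two_microlocal_iff_log_normalized:
  "two_microlocal c x0 s t \<longleftrightarrow>
    (\<exists>L. \<forall>j k. in_index x0 j k \<and> c j k \<noteq> 0 \<longrightarrow>
       (log 2 \<bar>c j k\<bar> + real j * \<alpha>) + t * (log 2 (offset_weight x0 j k) - \<gamma> * real j)
         \<le> L + real j * (\<alpha> - \<gamma> * t - s))"
  unfolding two_microlocal_iff_log by (simp add: algebra_simps)

lemma bound_inf_eq:
  assumes "0 < lam" "\<gamma> < 1"
  shows "bound_inf \<alpha> \<gamma> x0 j k lam =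
    (if offset_weight x0 j k / lam = 2 powr (\<gamma> * real j) then 2 powr (- real j * \<alpha>) else 0)"
proof -
  define q where "q = offset_weight x0 j k / lam / 2 powr (\<gamma> * real j)"
  have "0 < q"
    unfolding q_def using assms by simp
  have S_line_T: "S_line \<alpha> \<gamma> \<sigma> = \<alpha> + \<gamma> * (S_line \<alpha> \<gamma> \<sigma> - \<sigma>)" for \<sigma>
    using assms(2) unfolding S_line_def by (simp add: field_simps)
  define f where "f \<sigma> = 2 powr (- real j * S_line \<alpha> \<gamma> \<sigma>) *
      (offset_weight x0 j k / lam) powr (S_line \<alpha> \<gamma> \<sigma> - \<sigma>)" for \<sigma>
  have inf_f: "bound_inf \<alpha> \<gamma> x0 j k lam = Inf (range f)"
    unfolding bound_inf_def f_def offset_weight_def ..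
  have f_eq: "f \<sigma> = 2 powr (- real j * \<alpha>) * q powr (S_line \<alpha> \<gamma> \<sigma> - \<sigma>)" for \<sigma>
  proof -
    define T where "T = S_line \<alpha> \<gamma> \<sigma> - \<sigma>"
    have "f \<sigma> = 2 powr (- real j * \<alpha>) * ((2 powr (\<gamma> * real j)) powr (- T) *
        (offset_weight x0 j k / lam) powr T)"
      unfolding f_def T_def [symmetric] using S_line_T [of \<sigma>]
      by (simp add: powr_powr algebra_simps flip: T_def powr_add)
    also have "(2 powr (\<gamma> * real j)) powr (- T) * (offset_weight x0 j k / lam) powr T = q powr T"
      unfolding q_def using assms by (subst powr_divide) (auto simp: powr_minus divide_inverse)
    finally show ?thesis
      unfolding T_def .
  qed
  have q_eq_1_iff: "q = 1 \<longleftrightarrow> offset_weight x0 j k / lam = 2 powr (\<gamma> * real j)"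
    unfolding q_def using assms(1) by (auto simp: field_simps)
  show ?thesis
  proof (cases "q = 1")
    case True
    then show ?thesis
      unfolding inf_f f_eq using q_eq_1_iff by simp
  next
    case False
    have "Inf (range f) = 0"
    proof (rule cInf_eq_non_empty)
      show "0 \<le> y" if "y \<in> range f" for y
        using that f_eq by auto
      show "y \<le> 0" if lower: "\<And>x. x \<in> range f \<Longrightarrow> y \<le> x" for y
      proof (rule ccontr)
        assume "\<not> y \<le> 0"
        \<comment> \<open>Every line \<open>S(\<sigma>) - \<sigma> = T\<close> is realized, and \<open>q powr T\<close> gets arbitrarily small.\<close>
        define T where "T = log q (y / (2 * 2 powr (- real j * \<alpha>)))"
        have "S_line \<alpha> \<gamma> (\<alpha> - (1 - \<gamma>) * T) - (\<alpha> - (1 - \<gamma>) * T) = T"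
          using assms(2) unfolding S_line_def by (simp add: field_simps)
        then have "f (\<alpha> - (1 - \<gamma>) * T) = y / 2"
          unfolding f_eq T_def using \<open>0 < q\<close> False \<open>\<not> y \<le> 0\<close> by simp
        then show False
          using lower [of "f (\<alpha> - (1 - \<gamma>) * T)"] \<open>\<not> y \<le> 0\<close> by simp
      qed
    qed simp
    then show ?thesis
      unfolding inf_f using False q_eq_1_iff by simp
  qed
qed

lemma bound_inf_nonneg:
  assumes "0 < lam" "\<gamma> < 1"
  shows "0 \<le> bound_inf \<alpha> \<gamma> x0 j k lam"
  using bound_inf_eq [OF assms] by simp

definition majorant ::
    "(nat \<Rightarrow> int \<Rightarrow> real) \<Rightarrow> real \<Rightarrow> real \<Rightarrow> real \<Rightarrow> (nat \<Rightarrow> int \<Rightarrow> real) \<Rightarrow> (nat \<Rightarrow> int \<Rightarrow> real) \<Rightarrow> bool"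
  where "majorant c x0 \<alpha> \<gamma> CC lam \<longleftrightarrow>
    (\<forall>j k. in_index x0 j k \<longrightarrow> CC j k > 0 \<and> lam j k > 0) \<and>
    (\<forall>j k. in_index x0 j k \<longrightarrow> \<bar>c j k\<bar> \<le> CC j k * bound_inf \<alpha> \<gamma> x0 j k (lam j k))"

definition sublinear_logs :: "real \<Rightarrow> (nat \<Rightarrow> int \<Rightarrow> real) \<Rightarrow> (nat \<Rightarrow> int \<Rightarrow> real) \<Rightarrow> bool"
  where "sublinear_logs x0 CC lam \<longleftrightarrow>
    (\<forall>C::real. \<forall>kj :: nat \<Rightarrow> int. (\<forall>j. in_index x0 j (kj j)) \<longrightarrow>
       limsup (\<lambda>j. ereal (log 2 (CC j (kj j)) / real j + C * (log 2 (lam j (kj j)) / real j))) \<le> 0)"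

definition saturated_along_subsequence ::
    "(nat \<Rightarrow> int \<Rightarrow> real) \<Rightarrow> real \<Rightarrow> real \<Rightarrow> real \<Rightarrow> (nat \<Rightarrow> int \<Rightarrow> real) \<Rightarrow> (nat \<Rightarrow> int \<Rightarrow> real) \<Rightarrow> bool"
  where "saturated_along_subsequence c x0 \<alpha> \<gamma> CC lam \<longleftrightarrow>
    (\<exists>jn :: nat \<Rightarrow> nat. \<exists>kn :: nat \<Rightarrow> int.
       strict_mono jn \<and>
       (\<forall>n. in_index x0 (jn n) (kn n)) \<and>
       (\<forall>n. \<bar>c (jn n) (kn n)\<bar> = CC (jn n) (kn n) * bound_inf \<alpha> \<gamma> x0 (jn n) (kn n) (lam (jn n) (kn n))) \<and>
       (\<forall>n. c (jn n) (kn n) \<noteq> 0) \<and>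
       (\<lambda>n. log 2 (CC (jn n) (kn n)) / real (jn n)) \<longlonglongrightarrow> 0 \<and>
       (\<lambda>n. log 2 (lam (jn n) (kn n)) / real (jn n)) \<longlonglongrightarrow> 0)"

lemma majorant_log:
  assumes "majorant c x0 \<alpha> \<gamma> CC lam" "\<gamma> < 1" "in_index x0 j k" "c j k \<noteq> 0"
  shows "log 2 (lam j k) = log 2 (offset_weight x0 j k) - \<gamma> * real j"
    and "log 2 \<bar>c j k\<bar> + real j * \<alpha> \<le> log 2 (CC j k)"
    and "\<bar>c j k\<bar> = CC j k * bound_inf \<alpha> \<gamma> x0 j k (lam j k) \<Longrightarrow>
         log 2 \<bar>c j k\<bar> + real j * \<alpha> = log 2 (CC j k)"
proof -
  have pos: "0 < CC j k" "0 < lam j k"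
    and le: "\<bar>c j k\<bar> \<le> CC j k * bound_inf \<alpha> \<gamma> x0 j k (lam j k)"
    using assms(1,3) unfolding majorant_def by auto
  then have "bound_inf \<alpha> \<gamma> x0 j k (lam j k) \<noteq> 0"
    using assms(4) by auto
  then have ratio: "offset_weight x0 j k / lam j k = 2 powr (\<gamma> * real j)"
    and inf: "bound_inf \<alpha> \<gamma> x0 j k (lam j k) = 2 powr (- real j * \<alpha>)"
    using bound_inf_eq [OF pos(2) assms(2), of \<alpha> x0 j k] by (auto split: if_splits)
  have "log 2 (offset_weight x0 j k) - log 2 (lam j k) = \<gamma> * real j"
    using arg_cong [OF ratio, of "log 2"] pos offset_weight_pos [of x0 j k]
    by (simp add: log_divide)
  then show "log 2 (lam j k) = log 2 (offset_weight x0 j k) - \<gamma> * real j"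
    by simp
  have "log 2 \<bar>c j k\<bar> \<le> log 2 (CC j k * 2 powr (- real j * \<alpha>))"
    using le inf assms(4) pos by simp
  then show "log 2 \<bar>c j k\<bar> + real j * \<alpha> \<le> log 2 (CC j k)"
    using pos by (simp add: log_mult)
  show "log 2 \<bar>c j k\<bar> + real j * \<alpha> = log 2 (CC j k)"
    if "\<bar>c j k\<bar> = CC j k * bound_inf \<alpha> \<gamma> x0 j k (lam j k)"
    using that inf pos by (simp add: log_mult)
qed

lemma sublinear_logsI:
  assumes "\<And>t \<delta>. 0 < \<delta> \<Longrightarrow> \<exists>L. \<forall>j k. in_index x0 j k \<longrightarrow>
             log 2 (CC j k) + t * log 2 (lam j k) \<le> L + real j * \<delta>"
  shows "sublinear_logs x0 CC lam"
  unfolding sublinear_logs_def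
proof (intro allI impI)
  fix C :: real and kj :: "nat \<Rightarrow> int"
  assume kj: "\<forall>j. in_index x0 j (kj j)"
  show "limsup (\<lambda>j. ereal (log 2 (CC j (kj j)) / real j + C * (log 2 (lam j (kj j)) / real j))) \<le> 0"
  proof (rule ereal_le_epsilon2)
    fix e :: real
    assume "0 < e"
    then obtain L where L: "\<And>j. log 2 (CC j (kj j)) + C * log 2 (lam j (kj j)) \<le> L + real j * (e / 2)"
      using assms [of "e / 2" C] kj by auto
    have "eventually (\<lambda>j. L / real j < e / 2) sequentially"
      using lim_const_over_n [of L] \<open>0 < e\<close> by (intro order_tendstoD(2)) auto
    moreover have "eventually (\<lambda>j. 0 < real j) sequentially"
      by simp
    ultimately have "eventually (\<lambda>j. ereal (log 2 (CC j (kj j)) / real j + C * (log 2 (lam j (kj j)) / real j))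
        \<le> 0 + ereal e) sequentially"
    proof eventually_elim
      case (elim j)
      have "(log 2 (CC j (kj j)) + C * log 2 (lam j (kj j))) / real j \<le> (L + real j * (e / 2)) / real j"
        by (rule divide_right_mono [OF L]) (use elim(2) in simp)
      also have "\<dots> = L / real j + e / 2"
        using elim(2) by (simp add: add_divide_distrib)
      finally have "(log 2 (CC j (kj j)) + C * log 2 (lam j (kj j))) / real j < e"
        using elim(1) by linarith
      then show ?case
        by (simp add: add_divide_distrib)
    qed
    then show "limsup (\<lambda>j. ereal (log 2 (CC j (kj j)) / real j + C * (log 2 (lam j (kj j)) / real j)))
        \<le> 0 + ereal e"
      by (rule Limsup_bounded)
  qed
qed

lemma in_index_argmax:
  fixes f :: "int \<Rightarrow> 'a :: linorder"
  shows "\<exists>k. in_index x0 j k \<and> (\<forall>k'. in_index x0 j k' \<longrightarrow> f k' \<le> f k)"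
proof -
  have "Max (f ` {k. in_index x0 j k}) \<in> f ` {k. in_index x0 j k}"
    using finite_in_index in_index_round [of x0 j] by (intro Max_in) auto
  then obtain k where k: "in_index x0 j k" "f k = Max (f ` {k. in_index x0 j k})"
    by auto
  have "f k' \<le> f k" if "in_index x0 j k'" for k'
    unfolding k(2) using finite_in_index that by (intro Max_ge) auto
  with k(1) show ?thesis
    by blast
qed

text \<open>Since each level carries finitely many indices, the limsup along a level-wise maximizer
  controls all indices at once.\<close>

lemma sublinear_logsD:
  assumes "sublinear_logs x0 CC lam" "0 < \<delta>"
  shows "\<exists>L. \<forall>j k. in_index x0 j k \<longrightarrow> log 2 (CC j k) + t * log 2 (lam j k) \<le> L + real j * \<delta>"
proof -
  define Q where "Q j k = log 2 (CC j k) + t * log 2 (lam j k)" for j k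
  have "\<forall>j. \<exists>k. in_index x0 j k \<and> (\<forall>k'. in_index x0 j k' \<longrightarrow> Q j k' \<le> Q j k)"
    using in_index_argmax by blast
  then obtain kj where kj: "\<And>j. in_index x0 j (kj j)"
    and max: "\<And>j k. in_index x0 j k \<Longrightarrow> Q j k \<le> Q j (kj j)"
    by metis
  have "limsup (\<lambda>j. ereal (log 2 (CC j (kj j)) / real j + t * (log 2 (lam j (kj j)) / real j))) \<le> 0"
    using assms(1) kj unfolding sublinear_logs_def by blast
  also have "\<dots> < ereal \<delta>"
    using assms(2) by simp
  finally have "eventually (\<lambda>j. ereal (log 2 (CC j (kj j)) / real j + t * (log 2 (lam j (kj j)) / real j))
      < ereal \<delta>) sequentially"
    by (rule Limsup_lessD)
  then obtain N where N: "\<And>j. N \<le> j \<Longrightarrow> Q j (kj j) / real j < \<delta>"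
    unfolding Q_def eventually_sequentially by (auto simp: add_divide_distrib)
  define F where "F = Sigma {..<max N 1} (\<lambda>j. {k. in_index x0 j k})"
  define L where "L = Max (insert 0 (case_prod Q ` F))"
  have "finite F"
    unfolding F_def using finite_in_index by auto
  have "Q j k \<le> L + real j * \<delta>" if "in_index x0 j k" for j k
  proof (cases "j < max N 1")
    case True
    then have "Q j k \<le> L"
      unfolding L_def using that \<open>finite F\<close> by (intro Max_ge) (auto simp: F_def)
    moreover have "0 \<le> real j * \<delta>"
      using assms(2) by simp
    ultimately show ?thesis
      by linarith
  next
    case False
    then have "Q j (kj j) < real j * \<delta>"
      using N [of j] by (simp add: divide_less_eq mult.commute)
    moreover have "0 \<le> L"
      unfolding L_def using \<open>finite F\<close> by (intro Max_ge) auto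
    ultimately show ?thesis
      using max [OF that] by linarith
  qed
  then show ?thesis
    unfolding Q_def by blast
qed

lemma two_microlocal_below_S_line:
  assumes "\<gamma> < 1" "majorant c x0 \<alpha> \<gamma> CC lam" "sublinear_logs x0 CC lam"
    and "s < S_line \<alpha> \<gamma> \<sigma>"
  shows "two_microlocal c x0 s (\<sigma> - s)"
proof -
  define t where "t = \<sigma> - s"
  have "0 < (1 - \<gamma>) * (S_line \<alpha> \<gamma> \<sigma> - s)"
    using assms(1,4) by simp
  then have "0 < \<alpha> - \<gamma> * t - s"
    unfolding S_line_gap [OF assms(1)] t_def .
  then obtain L where L: "\<And>j k. in_index x0 j k \<Longrightarrow>
      log 2 (CC j k) + t * log 2 (lam j k) \<le> L + real j * (\<alpha> - \<gamma> * t - s)"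
    using sublinear_logsD [OF assms(3)] by blast
  have "(log 2 \<bar>c j k\<bar> + real j * \<alpha>) + t * (log 2 (offset_weight x0 j k) - \<gamma> * real j)
      \<le> L + real j * (\<alpha> - \<gamma> * t - s)"
    if "in_index x0 j k" "c j k \<noteq> 0" for j k
    using L [OF that(1)] majorant_log [OF assms(2,1) that] by simp
  then show ?thesis
    unfolding two_microlocal_iff_log_normalized [of _ _ _ _ \<alpha> \<gamma>] t_def [symmetric] by blast
qed

lemma S_line_upper_bound:
  assumes "\<gamma> < 1" "majorant c x0 \<alpha> \<gamma> CC lam" "saturated_along_subsequence c x0 \<alpha> \<gamma> CC lam"
    and "two_microlocal c x0 s (\<sigma> - s)"
  shows "s \<le> S_line \<alpha> \<gamma> \<sigma>"
proof -
  define t where "t = \<sigma> - s"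
  define \<epsilon> where "\<epsilon> = \<alpha> - \<gamma> * t - s"
  obtain L where L: "\<And>j k. in_index x0 j k \<Longrightarrow> c j k \<noteq> 0 \<Longrightarrow>
      (log 2 \<bar>c j k\<bar> + real j * \<alpha>) + t * (log 2 (offset_weight x0 j k) - \<gamma> * real j) \<le> L + real j * \<epsilon>"
    using assms(4) unfolding two_microlocal_iff_log_normalized [of _ _ _ _ \<alpha> \<gamma>] t_def [symmetric] \<epsilon>_def
    by blast
  obtain jn kn where jn: "strict_mono jn" and kn: "\<And>n. in_index x0 (jn n) (kn n)" "\<And>n. c (jn n) (kn n) \<noteq> 0"
    and attained: "\<And>n. \<bar>c (jn n) (kn n)\<bar> = CC (jn n) (kn n) * bound_inf \<alpha> \<gamma> x0 (jn n) (kn n) (lam (jn n) (kn n))"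
    and lim_CC: "(\<lambda>n. log 2 (CC (jn n) (kn n)) / real (jn n)) \<longlonglongrightarrow> 0"
    and lim_lam: "(\<lambda>n. log 2 (lam (jn n) (kn n)) / real (jn n)) \<longlonglongrightarrow> 0"
    using assms(3) unfolding saturated_along_subsequence_def by blast
  have along: "log 2 (CC (jn n) (kn n)) / real (jn n) + t * (log 2 (lam (jn n) (kn n)) / real (jn n))
      \<le> L / real (jn n) + \<epsilon>" if "1 \<le> n" for n
  proof -
    have "0 < real (jn n)"
      using seq_suble [OF jn, of n] that by simp
    have "log 2 (CC (jn n) (kn n)) + t * log 2 (lam (jn n) (kn n)) \<le> L + real (jn n) * \<epsilon>"
      using L [OF kn] majorant_log [OF assms(2,1) kn] attained by simp
    then have "(log 2 (CC (jn n) (kn n)) + t * log 2 (lam (jn n) (kn n))) / real (jn n)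
        \<le> (L + real (jn n) * \<epsilon>) / real (jn n)"
      using \<open>0 < real (jn n)\<close> by (simp add: divide_right_mono)
    then show ?thesis
      using \<open>0 < real (jn n)\<close> by (simp add: add_divide_distrib)
  qed
  have "(\<lambda>n. log 2 (CC (jn n) (kn n)) / real (jn n) + t * (log 2 (lam (jn n) (kn n)) / real (jn n)))
      \<longlonglongrightarrow> 0 + t * 0"
    by (intro tendsto_intros lim_CC lim_lam)
  moreover have "(\<lambda>n. L / real (jn n) + \<epsilon>) \<longlonglongrightarrow> 0 + \<epsilon>"
    using LIMSEQ_subseq_LIMSEQ [OF lim_const_over_n jn] by (intro tendsto_intros) (simp add: o_def)
  ultimately have "0 \<le> \<epsilon>"
    using along by (intro LIMSEQ_le [of _ "0 + t * 0" _ "0 + \<epsilon>", simplified]) (auto intro: exI [of _ 1])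
  then have "0 \<le> (1 - \<gamma>) * (S_line \<alpha> \<gamma> \<sigma> - s)"
    unfolding S_line_gap [OF assms(1)] \<epsilon>_def t_def .
  then show ?thesis
    using assms(1) by (simp add: zero_le_mult_iff)
qed

lemma microlocal_frontier_eq_S_line:
  assumes "\<gamma> < 1" "majorant c x0 \<alpha> \<gamma> CC lam" "sublinear_logs x0 CC lam"
    and "saturated_along_subsequence c x0 \<alpha> \<gamma> CC lam"
  shows "microlocal_frontier c x0 \<sigma> = ereal (S_line \<alpha> \<gamma> \<sigma>)"
  unfolding microlocal_frontier_eq_ereal_iff
  using two_microlocal_below_S_line [OF assms(1-3)] S_line_upper_bound [OF assms(1,2,4)] by blast

lemma S_line_frontier_upper:
  assumes "\<gamma> < 1" "\<forall>\<sigma>. microlocal_frontier c x0 \<sigma> = ereal (S_line \<alpha> \<gamma> \<sigma>)" "0 < \<epsilon>"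
  shows "\<exists>L. \<forall>j k. in_index x0 j k \<and> c j k \<noteq> 0 \<longrightarrow>
    (log 2 \<bar>c j k\<bar> + real j * \<alpha>) + t * (log 2 (offset_weight x0 j k) - \<gamma> * real j) \<le> L + real j * \<epsilon>"
proof -
  define s where "s = \<alpha> - \<gamma> * t - \<epsilon>"
  have "0 < (1 - \<gamma>) * (S_line \<alpha> \<gamma> (s + t) - s)"
    unfolding S_line_gap [OF assms(1)] s_def using assms(3) by simp
  then have "s < S_line \<alpha> \<gamma> (s + t)"
    using assms(1) by (simp add: zero_less_mult_iff)
  then have "two_microlocal c x0 s (s + t - s)"
    using assms(2) unfolding microlocal_frontier_eq_ereal_iff by blast
  then show ?thesis
    unfolding two_microlocal_iff_log_normalized [of _ _ _ _ \<alpha> \<gamma>] s_def by simp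
qed

lemma S_line_frontier_sharp:
  assumes "\<gamma> < 1" "\<forall>\<sigma>. microlocal_frontier c x0 \<sigma> = ereal (S_line \<alpha> \<gamma> \<sigma>)" "0 < \<epsilon>"
  shows "\<exists>j k. in_index x0 j k \<and> c j k \<noteq> 0 \<and> L - real j * \<epsilon> < log 2 \<bar>c j k\<bar> + real j * \<alpha>"
proof -
  have "(1 - \<gamma>) * (S_line \<alpha> \<gamma> (\<alpha> + \<epsilon>) - (\<alpha> + \<epsilon>)) < 0"
    unfolding S_line_gap [OF assms(1)] using assms(3) by simp
  then have "S_line \<alpha> \<gamma> (\<alpha> + \<epsilon>) < \<alpha> + \<epsilon>"
    using assms(1) by (simp add: mult_less_0_iff)
  then have "\<not> two_microlocal c x0 (\<alpha> + \<epsilon>) 0"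
    using assms(2) unfolding microlocal_frontier_eq_ereal_iff by (metis diff_self not_le)
  then show ?thesis
    unfolding two_microlocal_iff_log_normalized [of _ _ _ _ \<alpha> \<gamma>] by (auto simp: not_le)
qed

text \<open>With \<open>X = log |c_{j,k}| + j\<alpha>\<close> and \<open>Y = log (1 + |k - 2^j x_0|) - \<gamma> j\<close>, the bounds along
  the lines \<open>t = 0, 1, -1\<close> control \<open>X\<close> and \<open>X \<plusminus> Y\<close> from above, while sharpness at \<open>\<alpha> + \<epsilon>\<close>
  pushes \<open>X\<close> up at arbitrarily deep scales.\<close>

lemma S_line_frontier_saturating_index:
  assumes "\<gamma> < 1" "\<forall>\<sigma>. microlocal_frontier c x0 \<sigma> = ereal (S_line \<alpha> \<gamma> \<sigma>)" "0 < \<epsilon>"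
  shows "\<exists>j k. J < j \<and> in_index x0 j k \<and> c j k \<noteq> 0 \<and>
    \<bar>log 2 \<bar>c j k\<bar> + real j * \<alpha>\<bar> < real j * \<epsilon> \<and>
    \<bar>log 2 (offset_weight x0 j k) - \<gamma> * real j\<bar> < real j * \<epsilon>"
proof -
  define e where "e = \<epsilon> / 4"
  have "0 < e"
    unfolding e_def using assms(3) by simp
  have upper: "\<exists>L. \<forall>j k. in_index x0 j k \<and> c j k \<noteq> 0 \<longrightarrow>
      (log 2 \<bar>c j k\<bar> + real j * \<alpha>) + t * (log 2 (offset_weight x0 j k) - \<gamma> * real j) \<le> L + real j * e"
    for t
    using S_line_frontier_upper [OF assms(1,2) \<open>0 < e\<close>] .
  obtain L0 where
    L0: "\<And>j k. in_index x0 j k \<and> c j k \<noteq> 0 \<Longrightarrow> log 2 \<bar>c j k\<bar> + real j * \<alpha> \<le> L0 + real j * e"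
    using upper [of 0] by auto
  obtain L1 where
    L1: "\<And>j k. in_index x0 j k \<and> c j k \<noteq> 0 \<Longrightarrow>
      (log 2 \<bar>c j k\<bar> + real j * \<alpha>) + (log 2 (offset_weight x0 j k) - \<gamma> * real j) \<le> L1 + real j * e"
    using upper [of 1] by auto
  obtain L2 where
    L2: "\<And>j k. in_index x0 j k \<and> c j k \<noteq> 0 \<Longrightarrow>
      (log 2 \<bar>c j k\<bar> + real j * \<alpha>) - (log 2 (offset_weight x0 j k) - \<gamma> * real j) \<le> L2 + real j * e"
    using upper [of "-1"] by (auto simp: algebra_simps)
  define B where "B = \<bar>L0\<bar> + \<bar>L1\<bar> + \<bar>L2\<bar>"
  obtain j k where jk: "in_index x0 j k" "c j k \<noteq> 0"
    and sharp: "L0 + 2 * B + 2 * e * (real J + 1) - real j * e < log 2 \<bar>c j k\<bar> + real j * \<alpha>"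
    using S_line_frontier_sharp [OF assms(1,2) \<open>0 < e\<close>] by blast
  define X where "X = log 2 \<bar>c j k\<bar> + real j * \<alpha>"
  define Y where "Y = log 2 (offset_weight x0 j k) - \<gamma> * real j"
  have X: "X \<le> L0 + real j * e" and XY: "X + Y \<le> L1 + real j * e" and XY': "X - Y \<le> L2 + real j * e"
    using L0 [of j k] L1 [of j k] L2 [of j k] jk unfolding X_def Y_def by auto
  have "\<bar>L0\<bar> \<le> B" "\<bar>L1\<bar> \<le> B" "\<bar>L2\<bar> \<le> B"
    unfolding B_def by auto
  then have L_bounds: "-B \<le> L0" "L0 \<le> B" "L1 \<le> B" "L2 \<le> B"
    by (auto simp: abs_le_iff)
  have "0 \<le> e * (real J + 1)"
    using \<open>0 < e\<close> by simp
  then have deep: "B + e * (real J + 1) < real j * e"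
    using X sharp L_bounds unfolding X_def by linarith
  then have "e * (real J + 1) < e * real j"
    using L_bounds by (simp add: mult.commute)
  then have "J < j"
    using \<open>0 < e\<close> by simp
  have je: "real j * \<epsilon> = 4 * (real j * e)"
    unfolding e_def by simp
  have "\<bar>X\<bar> < real j * \<epsilon>" and "\<bar>Y\<bar> < real j * \<epsilon>"
    unfolding je abs_less_iff using X XY XY' sharp deep L_bounds \<open>0 \<le> e * (real J + 1)\<close>
    unfolding X_def [symmetric] by linarith+
  with \<open>J < j\<close> show ?thesis
    using jk unfolding X_def Y_def by blast
qed

lemma subsequence_tendsto_zero:
  fixes f g :: "nat \<Rightarrow> 'a \<Rightarrow> real"
  assumes "\<And>\<epsilon> J. 0 < \<epsilon> \<Longrightarrow> \<exists>j k. J < j \<and> P j k \<and> \<bar>f j k\<bar> < \<epsilon> \<and> \<bar>g j k\<bar> < \<epsilon>"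
  shows "\<exists>jn kn. strict_mono jn \<and> (\<forall>n. P (jn n) (kn n)) \<and>
    (\<lambda>n. f (jn n) (kn n)) \<longlonglongrightarrow> 0 \<and> (\<lambda>n. g (jn n) (kn n)) \<longlonglongrightarrow> 0"
proof -
  define good where "good n p \<longleftrightarrow> P (fst p) (snd p) \<and>
      \<bar>f (fst p) (snd p)\<bar> < 1 / real (Suc n) \<and> \<bar>g (fst p) (snd p)\<bar> < 1 / real (Suc n)" for n p
  have deeper: "\<exists>p. good n p \<and> J < fst p" for n J
    using assms [of "1 / real (Suc n)" J] unfolding good_def by auto
  have "\<exists>p. \<forall>n. good n (p n) \<and> fst (p n) < fst (p (Suc n))"
  proof (rule dependent_nat_choice)
    show "\<exists>p. good 0 p"
      using deeper by blast
    show "\<exists>q. good (Suc n) q \<and> fst p < fst q" for p :: "nat \<times> 'a" and n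
      using deeper [of "Suc n" "fst p"] by blast
  qed
  then obtain p where p: "\<And>n. good n (p n)" and mono: "\<And>n. fst (p n) < fst (p (Suc n))"
    by blast
  show ?thesis
  proof (intro exI conjI allI)
    show "strict_mono (\<lambda>n. fst (p n))"
      using mono by (simp add: strict_mono_Suc_iff)
    show "P (fst (p n)) (snd (p n))" for n
      using p [of n] unfolding good_def by blast
    show "(\<lambda>n. f (fst (p n)) (snd (p n))) \<longlonglongrightarrow> 0" "(\<lambda>n. g (fst (p n)) (snd (p n))) \<longlonglongrightarrow> 0"
      using p unfolding good_def by (auto intro: LIMSEQ_norm_0)
  qed
qed

text \<open>Off the support of \<open>c\<close> any positive values will do; \<open>1\<close> makes both logarithms vanish there.\<close>

definition canonical_CC :: "(nat \<Rightarrow> int \<Rightarrow> real) \<Rightarrow> real \<Rightarrow> nat \<Rightarrow> int \<Rightarrow> real" where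
  "canonical_CC c \<alpha> j k = (if c j k = 0 then 1 else \<bar>c j k\<bar> * 2 powr (real j * \<alpha>))"

definition canonical_lam :: "(nat \<Rightarrow> int \<Rightarrow> real) \<Rightarrow> real \<Rightarrow> real \<Rightarrow> nat \<Rightarrow> int \<Rightarrow> real" where
  "canonical_lam c x0 \<gamma> j k = (if c j k = 0 then 1 else offset_weight x0 j k / 2 powr (\<gamma> * real j))"

lemma log_canonical_CC:
  "log 2 (canonical_CC c \<alpha> j k) = (if c j k = 0 then 0 else log 2 \<bar>c j k\<bar> + real j * \<alpha>)"
  unfolding canonical_CC_def by (simp add: log_mult)

lemma log_canonical_lam:
  "log 2 (canonical_lam c x0 \<gamma> j k) =
    (if c j k = 0 then 0 else log 2 (offset_weight x0 j k) - \<gamma> * real j)"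
  unfolding canonical_lam_def by (simp add: log_divide)

lemma canonical_attained:
  assumes "\<gamma> < 1" "c j k \<noteq> 0"
  shows "\<bar>c j k\<bar> = canonical_CC c \<alpha> j k * bound_inf \<alpha> \<gamma> x0 j k (canonical_lam c x0 \<gamma> j k)"
proof -
  have "bound_inf \<alpha> \<gamma> x0 j k (canonical_lam c x0 \<gamma> j k) = 2 powr (- real j * \<alpha>)"
    using bound_inf_eq [of "canonical_lam c x0 \<gamma> j k" \<gamma> \<alpha> x0 j k] assms
    unfolding canonical_lam_def by simp
  then show ?thesis
    using assms(2) unfolding canonical_CC_def by (simp flip: powr_add)
qed

lemma majorant_canonical:
  assumes "\<gamma> < 1"
  shows "majorant c x0 \<alpha> \<gamma> (canonical_CC c \<alpha>) (canonical_lam c x0 \<gamma>)"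
proof -
  have pos: "0 < canonical_CC c \<alpha> j k" "0 < canonical_lam c x0 \<gamma> j k" for j k
    unfolding canonical_CC_def canonical_lam_def by auto
  have "\<bar>c j k\<bar> \<le> canonical_CC c \<alpha> j k * bound_inf \<alpha> \<gamma> x0 j k (canonical_lam c x0 \<gamma> j k)" for j k
    using canonical_attained [OF assms, of c j k \<alpha> x0] bound_inf_nonneg [OF pos(2) assms, of \<alpha> x0 j k] pos(1) [of j k]
    by (cases "c j k = 0") auto
  with pos show ?thesis
    unfolding majorant_def by blast
qed

lemma sublinear_logs_canonical:
  assumes "\<gamma> < 1" "\<forall>\<sigma>. microlocal_frontier c x0 \<sigma> = ereal (S_line \<alpha> \<gamma> \<sigma>)"
  shows "sublinear_logs x0 (canonical_CC c \<alpha>) (canonical_lam c x0 \<gamma>)"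
proof (rule sublinear_logsI)
  fix t \<delta> :: real
  assume "0 < \<delta>"
  then obtain L where "\<forall>j k. in_index x0 j k \<and> c j k \<noteq> 0 \<longrightarrow>
      (log 2 \<bar>c j k\<bar> + real j * \<alpha>) + t * (log 2 (offset_weight x0 j k) - \<gamma> * real j) \<le> L + real j * \<delta>"
    using S_line_frontier_upper [OF assms] by blast
  then have "log 2 (canonical_CC c \<alpha> j k) + t * log 2 (canonical_lam c x0 \<gamma> j k) \<le> max L 0 + real j * \<delta>"
    if "in_index x0 j k" for j k
    using that \<open>0 < \<delta>\<close> unfolding log_canonical_CC log_canonical_lam
    by (cases "c j k = 0") (auto intro: add_increasing2 order_trans [OF _ add_right_mono [OF max.cobounded1]])
  then show "\<exists>L. \<forall>j k. in_index x0 j k \<longrightarrow>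
      log 2 (canonical_CC c \<alpha> j k) + t * log 2 (canonical_lam c x0 \<gamma> j k) \<le> L + real j * \<delta>"
    by blast
qed

lemma saturated_canonical:
  assumes "\<gamma> < 1" "\<forall>\<sigma>. microlocal_frontier c x0 \<sigma> = ereal (S_line \<alpha> \<gamma> \<sigma>)"
  shows "saturated_along_subsequence c x0 \<alpha> \<gamma> (canonical_CC c \<alpha>) (canonical_lam c x0 \<gamma>)"
proof -
  have "\<exists>j k. J < j \<and> (in_index x0 j k \<and> c j k \<noteq> 0) \<and>
      \<bar>log 2 (canonical_CC c \<alpha> j k) / real j\<bar> < \<epsilon> \<and> \<bar>log 2 (canonical_lam c x0 \<gamma> j k) / real j\<bar> < \<epsilon>"
    if "0 < \<epsilon>" for \<epsilon> J
    using S_line_frontier_saturating_index [OF assms that, of J]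
    by (auto simp: log_canonical_CC log_canonical_lam divide_less_eq mult.commute)
  from subsequence_tendsto_zero [OF this] obtain jn kn where "strict_mono jn"
    "\<And>n. in_index x0 (jn n) (kn n) \<and> c (jn n) (kn n) \<noteq> 0"
    "(\<lambda>n. log 2 (canonical_CC c \<alpha> (jn n) (kn n)) / real (jn n)) \<longlonglongrightarrow> 0"
    "(\<lambda>n. log 2 (canonical_lam c x0 \<gamma> (jn n) (kn n)) / real (jn n)) \<longlonglongrightarrow> 0"
    by blast
  then show ?thesis
    unfolding saturated_along_subsequence_def using canonical_attained [OF assms(1)] by blast
qed

theorem theorem2p2:
  fixes c :: "nat \<Rightarrow> int \<Rightarrow> real" and x0 \<alpha> \<gamma> :: real
  assumes "0 \<le> \<gamma>" and "\<gamma> < 1"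
  shows "(\<forall>\<sigma>. microlocal_frontier c x0 \<sigma> = ereal (S_line \<alpha> \<gamma> \<sigma>)) \<longleftrightarrow>
    (\<exists>CC lam :: nat \<Rightarrow> int \<Rightarrow> real.
       (\<forall>j k. in_index x0 j k \<longrightarrow> CC j k > 0 \<and> lam j k > 0) \<and>
       (\<forall>j k. in_index x0 j k \<longrightarrow> \<bar>c j k\<bar> \<le> CC j k * bound_inf \<alpha> \<gamma> x0 j k (lam j k)) \<and>
       (\<forall>C::real. \<forall>kj :: nat \<Rightarrow> int. (\<forall>j. in_index x0 j (kj j)) \<longrightarrow>
          limsup (\<lambda>j. ereal (log 2 (CC j (kj j)) / real j + C * (log 2 (lam j (kj j)) / real j))) \<le> 0) \<and>
       (\<exists>jn :: nat \<Rightarrow> nat. \<exists>kn :: nat \<Rightarrow> int.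
          strict_mono jn \<and>
          (\<forall>n. in_index x0 (jn n) (kn n)) \<and>
          (\<forall>n. \<bar>c (jn n) (kn n)\<bar> = CC (jn n) (kn n) * bound_inf \<alpha> \<gamma> x0 (jn n) (kn n) (lam (jn n) (kn n))) \<and>
          (\<forall>n. c (jn n) (kn n) \<noteq> 0) \<and>
          (\<lambda>n. log 2 (CC (jn n) (kn n)) / real (jn n)) \<longlonglongrightarrow> 0 \<and>
          (\<lambda>n. log 2 (lam (jn n) (kn n)) / real (jn n)) \<longlonglongrightarrow> 0))"
proof -
  have "(\<forall>\<sigma>. microlocal_frontier c x0 \<sigma> = ereal (S_line \<alpha> \<gamma> \<sigma>)) \<longleftrightarrow>
    (\<exists>CC lam. majorant c x0 \<alpha> \<gamma> CC lam \<and> sublinear_logs x0 CC lam \<and>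
       saturated_along_subsequence c x0 \<alpha> \<gamma> CC lam)"
    using majorant_canonical sublinear_logs_canonical saturated_canonical
      microlocal_frontier_eq_S_line \<open>\<gamma> < 1\<close> by blast
  then show ?thesis
    unfolding majorant_def sublinear_logs_def saturated_along_subsequence_def by simp
qed

end
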